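(* Let $\mathcal M$ satisfy Assumption (A), let $F$ and $\{f_s\}_{s\in\mathcal S}$ be as in the context, and suppose Assumption (I) holds. For $s,s'\in\mathcal S$ define $T^*_{\langle s'|s\rangle}:=f_{s'}\circ f_s^{-1}|_{\mathcal X_s}$ ($\mu_s$-a.e. defined). Then for all $s,s'\in\mathcal S$: 1. $\mu_{\langle s'|s\rangle}(\cdot\mid x)=\delta_{T^*_{\langle s'|s\rangle}(x)}$ for $\mu_s$-almost every $x\in\mathcal X_s$; 2. $\mu_{\langle s'|s\rangle}=(T^*_{\langle s'|s\rangle})_\sharp\mu_s$; 3. $\pi^*_{\langle s'|s\rangle}=(I\times T^*_{\langle s'|s\rangle})_\sharp\mu_s$, where $I$ is the identity.
   Context: Let $(\Omega,\mathcal A,\mathbb P)$ be a probability space. A structural causal model (SCM) $\mathcal M=\langle U,G\rangle$ consists of two disjoint finite index sets $\mathcal I$ (endogenous) and $\mathcal J$ (exogenous), measurable product spaces $\mathcal V=\prod_{i\in\mathcal I}\mathcal V_i\subseteq\mathbb R^{|\mathcal I|}$ and $\mathcal U=\prod_{j\in\mathcal J}\mathcal U_j\subseteq\mathbb R^{|\mathcal J|}$, a random vector $U:\Omega\to\mathcal U$ (its components need not be independent), and for each $i\in\mathcal I$ subsets $\mathrm{Endo}(i)\subseteq\mathcal I$, $\mathrm{Exo}(i)\subseteq\mathcal J$ (endogenous and exogenous parents) and a measurable map $G_i:\mathcal V_{\mathrm{Endo}(i)}\times\mathcal U_{\mathrm{Exo}(i)}\to\mathcal V_i$. A random vector $V:\Omega\to\mathcal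 V$ is a solution of $\mathcal M$ if $V_i=G_i(V_{\mathrm{Endo}(i)},U_{\mathrm{Exo}(i)})$ $\mathbb P$-a.s. for every $i\in\mathcal I$. The graph of $\mathcal M$ has nodes $\mathcal I\cup\mathcal J$ and an edge $k\to l$ iff $l\in\mathcal I$ and $k\in\mathrm{Endo}(l)\cup\mathrm{Exo}(l)$. Assumption (A): the graph of $\mathcal M$ is acyclic; then $\mathcal M$ has a solution, unique up to $\mathbb P$-null sets. For $I\subseteq\mathcal I$ and $v_I\in\mathcal V_I$, the do-intervention $\mathrm{do}(V_I=v_I)$ produces the model $\langle U,\tilde G\rangle$ with $\tilde G_i\equiv v_i$ for $i\in I$ and $\tilde G_i=G_i$ otherwise (same $U$); it is again acyclic, and its solution is denoted $V_{V_I=v_I}$. Standing setting: the solution is $V=(X,S)$ where $X:\Omega\to\mathcal X\subseteq\mathbb R^d$ and $S:\Omega\to\mathcal S$ with $\mathcal S\subset\mathbb R$ finite and $\mathbb P(S=s)>0$ for all $s\in\mathcal S$. $U_X$ denotes the vector of exogenous parents of the components of $X$, and $U_S$ that of $S$. For $s\in\mathcal S$, $X_{S=s}$ denotes the $X$-component of the solution of the model intervened by $\mathrm{do}(S=s)$. Notation: $\mu_s:=\mathcal L(X\mid S=s)$ with support $\mathcal X_s$; $\mu_{S=s}:=\mathcal L(X_{S=s})$; $\mu_{\langle s'|s\rangle}:=\mathcal L(X_{S=s'}\mid S=s)$; $\mu_{\langle s'|s\rangle}(\cdot\mid x):=\mathcal L(X_{S=s'}\mid X=x,S=s)$. The structural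 counterfactual coupling is $\pi^*_{\langle s'|s\rangle}:=\mathcal L\big((X,X_{S=s'})\mid S=s\big)$. Under (A) there is a measurable $F$ with $X=F(S,U_X)$ a.s. and $X_{S=s}=F(s,U_X)$ a.s. for every $s$; set $f_s(u):=F(s,u)$. Assumption (I): the functions $\{f_s\}_{s\in\mathcal S}$ are injective. For a measurable map $T$ and measure $P$, $T_\sharp P:=P\circ T^{-1}$; $(T_1\times T_2)(x):=(T_1(x),T_2(x))$. *)

theory Defs
  imports "HOL-Probability.Probability"
begin

definition event_eq :: "'w measure \<Rightarrow> ('w \<Rightarrow> real) \<Rightarrow> real \<Rightarrow> 'w set" where
  "event_eq M S s = {\<omega> \<in> space M. S \<omega> = s}"

definition cond_space :: "'w measure \<Rightarrow> ('w \<Rightarrow> real) \<Rightarrow> real \<Rightarrow> 'w measure" where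
  "cond_space M S s =
     density M (\<lambda>\<omega>. indicator (event_eq M S s) \<omega> / ennreal (measure M (event_eq M S s)))"

definition cond_law :: "'w measure \<Rightarrow> ('w \<Rightarrow> real) \<Rightarrow> real \<Rightarrow> ('w \<Rightarrow> 'b::topological_space) \<Rightarrow> 'b measure" where
  "cond_law M S s Y = distr (cond_space M S s) borel Y"

definition is_cond_distr ::
  "'w measure \<Rightarrow> ('w \<Rightarrow> 'a::topological_space) \<Rightarrow> ('w \<Rightarrow> 'b::topological_space)
     \<Rightarrow> ('a \<Rightarrow> 'b measure) \<Rightarrow> bool" where
  "is_cond_distr P X Y \<kappa> \<longleftrightarrow>
     \<kappa> \<in> measurable borel (prob_algebra borel) \<and>
     (\<forall>A \<in> sets borel. \<forall>B \<in> sets borel.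
        emeasure P {\<omega> \<in> space P. X \<omega> \<in> A \<and> Y \<omega> \<in> B}
        = (\<integral>\<^sup>+ x \<in> A. emeasure (\<kappa> x) B \<partial>(distr P borel X)))"

definition Tstar :: "(real \<Rightarrow> 'u \<Rightarrow> 'x) \<Rightarrow> 'u set \<Rightarrow> real \<Rightarrow> real \<Rightarrow> 'x \<Rightarrow> 'x" where
  "Tstar F UXsp s s' x = F s' (inv_into UXsp (F s) x)"

end

theory Submission
  imports Defs
begin

(*
  Given S = s, almost surely X = f_s(U_X) and X_{S=s'} = f_{s'}(U_X), so by injectivity of f_s
  the counterfactual is a function of the factual value: X_{S=s'} = T(X) a.s. with
  T = f_{s'} o f_s^{-1} on the range of f_s. The delicate point is a Borel version of T, since
  f_s^{-1} need not be Borel. Inner regularity concentrates the law of (U_X, X, X_{S=s'}) on a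
  sigma-compact part of the graph of (f_s, f_{s'}); its projection to the last two coordinates is
  a sigma-compact graph of T, over whose (Borel) domain T is Borel measurable.
  Parts 2 and 3 are then image-measure identities, and part 1 is uniqueness of disintegration:
  a kernel reproducing the joint law of (X, T(X)) agrees with the Dirac kernel at T(x) on a countable
  intersection-stable generator, hence everywhere, for almost every x.
*)

lemma sets_cond_space [simp]: "sets (cond_space M S s) = sets M"
  by (simp add: cond_space_def)

lemma space_cond_space [simp]: "space (cond_space M S s) = space M"
  by (simp add: cond_space_def)

lemma measurable_cond_space [simp]: "measurable (cond_space M S s) N = measurable M N"
  by (rule measurable_cong_sets) simp_all

lemma event_eq_measurable [measurable]:
  "S \<in> borel_measurable M \<Longrightarrow> event_eq M S s \<in> sets M"
  unfolding event_eq_def by measurable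

lemma AE_cond_space_iff:
  assumes [measurable]: "S \<in> borel_measurable M"
  shows "(AE \<omega> in cond_space M S s. Q \<omega>) \<longleftrightarrow> (AE \<omega> in M. S \<omega> = s \<longrightarrow> Q \<omega>)"
  unfolding cond_space_def
  by (subst AE_density) (auto simp: event_eq_def indicator_def ennreal_zero_less_divide intro!: AE_cong)

lemma prob_space_cond_space:
  assumes "prob_space M" and [measurable]: "S \<in> borel_measurable M"
    and pos: "measure M (event_eq M S s) > 0"
  shows "prob_space (cond_space M S s)"
proof (rule prob_spaceI)
  interpret prob_space M by fact
  let ?E = "event_eq M S s"
  have "emeasure (cond_space M S s) (space M) = (\<integral>\<^sup>+ \<omega>. indicator ?E \<omega> \<partial>M) / ennreal (measure M ?E)"
    unfolding cond_space_def by (simp add: emeasure_density nn_integral_divide)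
  also have "\<dots> = 1"
    using pos by (simp add: emeasure_eq_measure)
  finally show "emeasure (cond_space M S s) (space (cond_space M S s)) = 1" by simp
qed

lemma AE_in_sigma_compact_subset:
  fixes \<rho> :: "'a::{second_countable_topology, complete_space} measure"
  assumes "finite_measure \<rho>" and sets_\<rho>: "sets \<rho> = sets borel"
    and G: "G \<in> sets borel" and AE_G: "AE z in \<rho>. z \<in> G"
  obtains K :: "nat \<Rightarrow> 'a set" where "\<And>n. compact (K n)" "\<And>n. K n \<subseteq> G"
    "AE z in \<rho>. z \<in> (\<Union>n. K n)"
proof -
  interpret finite_measure \<rho> by fact
  let ?C = "{K. K \<subseteq> G \<and> compact K}"
  have inner: "emeasure \<rho> G = (SUP K \<in> ?C. emeasure \<rho> K)"
    using sets_\<rho> G by (intro inner_regular) auto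
  have "{} \<in> ?C"
    by simp
  then obtain f :: "nat \<Rightarrow> ennreal" where f: "range f \<subseteq> emeasure \<rho> ` ?C" "(SUP K \<in> ?C. emeasure \<rho> K) = (SUP n. f n)"
    using ennreal_SUP_countable_SUP[of ?C "emeasure \<rho>"] by blast
  then have "\<forall>n. \<exists>K. K \<in> ?C \<and> f n = emeasure \<rho> K"
    by blast
  then obtain K where "\<forall>n. K n \<in> ?C \<and> f n = emeasure \<rho> (K n)"
    by (rule choice[THEN exE])
  then have K: "\<And>n. K n \<in> ?C" "\<And>n. f n = emeasure \<rho> (K n)"
    by auto
  have K_sets: "K n \<in> sets \<rho>" for n
    using K(1)[of n] sets_\<rho> by (auto intro: borel_closed compact_imp_closed)
  have "emeasure \<rho> G \<le> emeasure \<rho> (\<Union>n. K n)"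
    unfolding inner f(2) K(2) using K_sets by (intro SUP_least emeasure_mono) auto
  moreover have "emeasure \<rho> (\<Union>n. K n) \<le> emeasure \<rho> G"
    using K(1) K_sets G sets_\<rho> by (intro emeasure_mono) auto
  ultimately have "emeasure \<rho> G = emeasure \<rho> (\<Union>n. K n)"
    by (rule antisym)
  then have "emeasure \<rho> (G - (\<Union>n. K n)) = 0"
    using K(1) K_sets G sets_\<rho> by (subst emeasure_Diff) auto
  then have "AE z in \<rho>. z \<notin> G - (\<Union>n. K n)"
    using K_sets G sets_\<rho> by (intro AE_not_in) (auto intro: null_setsI)
  with AE_G have "AE z in \<rho>. z \<in> (\<Union>n. K n)"
    by eventually_elim blast
  then show ?thesis
    using K(1) that by blast
qed

lemma borel_measurable_sigma_compact_graph:
  fixes L :: "nat \<Rightarrow> ('a::t2_space \<times> 'b::topological_space) set"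
  assumes L: "\<And>n. compact (L n)" and graph: "\<And>n x y. (x, y) \<in> L n \<Longrightarrow> y = h x"
  shows "(\<Union>n. fst ` L n) \<in> sets borel"
    and "(\<lambda>x. if x \<in> (\<Union>n. fst ` L n) then h x else c) \<in> borel_measurable borel"
proof -
  let ?D = "\<Union>n. fst ` L n"
  let ?T = "\<lambda>x. if x \<in> ?D then h x else c"
  have proj: "fst ` (L n \<inter> UNIV \<times> C) \<in> sets borel" if "closed C" for n C
  proof -
    have "compact (L n \<inter> UNIV \<times> C)"
      using L that by (intro compact_Int_closed closed_Times) auto
    then have "compact (fst ` (L n \<inter> UNIV \<times> C))"
      by (intro compact_continuous_image continuous_on_fst continuous_on_id)
    then show ?thesis
      by (intro borel_closed compact_imp_closed)
  qed
  show D: "?D \<in> sets borel"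
    using proj[of UNIV] by (intro sets.countable_UN) auto
  then have D_compl: "- ?D \<in> sets borel"
    by (rule borel_comp)
  have preimage: "?T -` C = (\<Union>n. fst ` (L n \<inter> UNIV \<times> C)) \<union> (if c \<in> C then - ?D else {})" for C
  proof (intro set_eqI iffI)
    fix x assume x: "x \<in> ?T -` C"
    show "x \<in> (\<Union>n. fst ` (L n \<inter> UNIV \<times> C)) \<union> (if c \<in> C then - ?D else {})"
    proof (cases "x \<in> ?D")
      case True
      then obtain n y where "(x, y) \<in> L n" by force
      with graph[OF this] x True have "(x, y) \<in> L n \<inter> UNIV \<times> C" by simp
      then show ?thesis by (intro UnI1 UN_I[of n] image_eqI[of _ fst "(x, y)"]) auto
    qed (use x in auto)
  next
    fix x assume "x \<in> (\<Union>n. fst ` (L n \<inter> UNIV \<times> C)) \<union> (if c \<in> C then - ?D else {})"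
    then show "x \<in> ?T -` C"
    proof (elim UnE)
      assume "x \<in> (\<Union>n. fst ` (L n \<inter> UNIV \<times> C))"
      then obtain n y where xy: "(x, y) \<in> L n" "y \<in> C" by force
      then have "x \<in> ?D" by force
      with xy graph[OF xy(1)] show ?thesis by simp
    qed (auto split: if_splits)
  qed
  then have closed_preimage: "?T -` C \<in> sets borel" if "closed C" for C
    unfolding preimage using proj[OF that] D_compl by (intro sets.Un sets.countable_UN) auto
  show "?T \<in> borel_measurable borel"
  proof (rule borel_measurableI)
    fix W :: "'b set" assume "open W"
    then have "?T -` (- W) \<in> sets borel"
      by (intro closed_preimage closed_Compl)
    then have "- (?T -` (- W)) \<in> sets borel"
      by (rule borel_comp)
    then show "?T -` W \<inter> space borel \<in> sets borel"
      by (simp add: vimage_Compl)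
  qed
qed

lemma borel_factor_on_sigma_compact_graph:
  fixes K :: "nat \<Rightarrow> ('u::topological_space \<times> 'x::t2_space \<times> 'y::{topological_space, zero}) set"
  assumes K: "\<And>n. compact (K n)"
    and K_graph: "\<And>n. K n \<subseteq> {(u, x, y). u \<in> Usp \<and> x = f u \<and> y = g u}"
    and inj: "inj_on f Usp"
  obtains T D where "T \<in> borel_measurable borel" "D \<in> sets borel" "D \<subseteq> f ` Usp"
    "\<And>x. x \<in> D \<Longrightarrow> T x = g (inv_into Usp f x)"
    "\<And>n u x y. (u, x, y) \<in> K n \<Longrightarrow> x \<in> D \<and> y = T x"
proof -
  define L where "L n = snd ` K n" for n
  have L_compact: "compact (L n)" for n
    unfolding L_def using K by (intro compact_continuous_image continuous_on_snd continuous_on_id)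
  have L_graph: "x \<in> f ` Usp \<and> y = g (inv_into Usp f x)" if xy: "(x, y) \<in> L n" for n x y
  proof -
    obtain u where "(u, x, y) \<in> K n"
      using xy unfolding L_def by force
    then have "u \<in> Usp" "x = f u" "y = g u"
      using K_graph by blast+
    then show ?thesis
      using inj by simp
  qed
  then have L_fun: "y = g (inv_into Usp f x)" if "(x, y) \<in> L n" for n x y
    using that by blast
  define D where "D = (\<Union>n. fst ` L n)"
  define T where "T x = (if x \<in> D then g (inv_into Usp f x) else 0)" for x
  have "T \<in> borel_measurable borel"
    unfolding T_def[abs_def] D_def by (rule borel_measurable_sigma_compact_graph(2)[OF L_compact L_fun])
  moreover have "D \<in> sets borel"
    unfolding D_def by (rule borel_measurable_sigma_compact_graph(1)[OF L_compact L_fun])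
  moreover have "D \<subseteq> f ` Usp"
    unfolding D_def using L_graph by force
  moreover have "T x = g (inv_into Usp f x)" if "x \<in> D" for x
    using that by (simp add: T_def)
  moreover have "x \<in> D \<and> y = T x" if "(u, x, y) \<in> K n" for n u x y
  proof -
    have "(x, y) \<in> L n"
      using that unfolding L_def by force
    with L_fun[OF this] show ?thesis
      unfolding D_def T_def by force
  qed
  ultimately show ?thesis
    by (rule that)
qed

lemma borel_measurable_fst_borel [measurable]:
  "fst \<in> borel_measurable (borel :: ('a::topological_space \<times> 'b::topological_space) measure)"
  by (intro borel_measurable_continuous_onI continuous_intros)

lemma borel_measurable_snd_borel [measurable]:
  "snd \<in> borel_measurable (borel :: ('a::topological_space \<times> 'b::topological_space) measure)"
  by (intro borel_measurable_continuous_onI continuous_intros)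

lemma AE_factor_through_injective:
  fixes U :: "'w \<Rightarrow> 'u::polish_space"
    and X :: "'w \<Rightarrow> 'x::{banach, second_countable_topology}"
    and Y :: "'w \<Rightarrow> 'y::{banach, second_countable_topology}"
  assumes "finite_measure Q"
    and [measurable]: "U \<in> borel_measurable Q" "X \<in> borel_measurable Q" "Y \<in> borel_measurable Q"
      "Usp \<in> sets borel"
    and f: "f \<in> borel_measurable (restrict_space borel Usp)"
    and g: "g \<in> borel_measurable (restrict_space borel Usp)"
    and inj: "inj_on f Usp"
    and AE_UXY: "AE \<omega> in Q. U \<omega> \<in> Usp \<and> X \<omega> = f (U \<omega>) \<and> Y \<omega> = g (U \<omega>)"
  obtains T where "T \<in> borel_measurable borel" "AE \<omega> in Q. Y \<omega> = T (X \<omega>)"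
    "AE x in distr Q borel X. x \<in> f ` Usp \<and> T x = g (inv_into Usp f x)"
proof -
  interpret Q: finite_measure Q by fact
  \<comment> \<open>Extending f and g by 0 makes the graph G of \<open>u \<mapsto> (f u, g u)\<close> over Usp Borel.\<close>
  define f' where "f' u = indicator Usp u *\<^sub>R f u" for u
  define g' where "g' u = indicator Usp u *\<^sub>R g u" for u
  have [measurable]: "f' \<in> borel_measurable borel" "g' \<in> borel_measurable borel"
    using f g by (simp_all add: f'_def[abs_def] g'_def[abs_def] borel_measurable_restrict_space_iff)
  define G :: "('u \<times> 'x \<times> 'y) set"
    where "G = {z. fst z \<in> Usp \<and> fst (snd z) = f' (fst z) \<and> snd (snd z) = g' (fst z)}"
  have G_borel [measurable]: "G \<in> sets borel"
    unfolding G_def by measurable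
  define \<rho> where "\<rho> = distr Q borel (\<lambda>\<omega>. (U \<omega>, X \<omega>, Y \<omega>))"
  have \<rho>_finite: "finite_measure \<rho>"
    unfolding \<rho>_def by (rule Q.finite_measure_distr) simp
  have sets_\<rho>: "sets \<rho> = sets borel"
    by (simp add: \<rho>_def)
  have AE_G: "AE z in \<rho>. z \<in> G"
    unfolding \<rho>_def
  proof (subst AE_distr_iff)
    show "AE \<omega> in Q. (U \<omega>, X \<omega>, Y \<omega>) \<in> G"
      using AE_UXY by eventually_elim (auto simp: G_def f'_def g'_def)
  qed simp_all
  obtain K :: "nat \<Rightarrow> ('u \<times> 'x \<times> 'y) set" where K: "\<And>n. compact (K n)" "\<And>n. K n \<subseteq> G"
    and AE_K: "AE z in \<rho>. z \<in> (\<Union>n. K n)"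
    by (rule AE_in_sigma_compact_subset[OF \<rho>_finite sets_\<rho> G_borel AE_G]) (rule that)
  have [measurable]: "K n \<in> sets borel" for n
    using K(1) by (simp add: borel_closed compact_imp_closed)
  have K_graph: "K n \<subseteq> {(u, x, y). u \<in> Usp \<and> x = f u \<and> y = g u}" for n
    using K(2)[of n] by (fastforce simp: G_def f'_def g'_def)
  obtain T D where T: "T \<in> borel_measurable borel" and [measurable]: "D \<in> sets borel"
    and D: "D \<subseteq> f ` Usp" "\<And>x. x \<in> D \<Longrightarrow> T x = g (inv_into Usp f x)"
    and K_T: "\<And>n u x y. (u, x, y) \<in> K n \<Longrightarrow> x \<in> D \<and> y = T x"
    by (rule borel_factor_on_sigma_compact_graph[OF K(1) K_graph inj]) (rule that)
  have "AE \<omega> in Q. (U \<omega>, X \<omega>, Y \<omega>) \<in> (\<Union>n. K n)"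
    using AE_K unfolding \<rho>_def by (subst (asm) AE_distr_iff) simp_all
  then have AE_XY: "AE \<omega> in Q. X \<omega> \<in> D \<and> Y \<omega> = T (X \<omega>)"
    by eventually_elim (auto dest: K_T)
  then have "AE x in distr Q borel X. x \<in> D"
    by (subst AE_distr_iff) (auto elim: AE_mp)
  then have "AE x in distr Q borel X. x \<in> f ` Usp \<and> T x = g (inv_into Usp f x)"
    by eventually_elim (use D in auto)
  with AE_XY T show ?thesis
    using that by (auto elim: AE_mp)
qed

lemma countable_Int_stable_generator_borel:
  obtains E :: "'a::second_countable_topology set set"
  where "countable E" "Int_stable E" "UNIV \<in> E" "E \<subseteq> sets borel" "sets borel = sigma_sets UNIV E"
proof -
  obtain B :: "'a set set" where B: "countable B" "topological_basis B"
    using ex_countable_basis by blast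
  define E where "E = Inter ` {F. finite F \<and> F \<subseteq> B}"
  have "countable E"
    unfolding E_def using countable_Collect_finite_subset[OF B(1)] by simp
  moreover have "Int_stable E"
    unfolding Int_stable_def E_def
  proof safe
    fix F G assume "finite F" "F \<subseteq> B" "finite G" "G \<subseteq> B"
    then show "\<Inter>F \<inter> \<Inter>G \<in> Inter ` {F. finite F \<and> F \<subseteq> B}"
      by (intro image_eqI[where x="F \<union> G"]) auto
  qed
  moreover have "UNIV \<in> E"
    unfolding E_def by (auto intro!: image_eqI[where x="{}"])
  moreover have E_borel: "E \<subseteq> sets borel"
  proof
    fix a assume "a \<in> E"
    then obtain F where "finite F" "F \<subseteq> B" "a = \<Inter>F"
      unfolding E_def by auto
    then have "open a"
      using B(2) by (auto intro!: open_Inter simp: topological_basis_open)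
    then show "a \<in> sets borel" by simp
  qed
  moreover have "sets borel = sigma_sets UNIV E"
  proof -
    have borel_B: "sets borel = sigma_sets UNIV B"
      using borel_eq_countable_basis[OF B] by (metis sets_measure_of top_greatest Pow_UNIV)
    show ?thesis
      unfolding borel_B
    proof (rule sigma_sets_eqI)
      show "a \<in> sigma_sets UNIV E" if "a \<in> B" for a
        using that unfolding E_def by (intro sigma_sets.Basic image_eqI[where x="{a}"]) auto
      show "a \<in> sigma_sets UNIV B" if "a \<in> E" for a
        using that E_borel borel_B by auto
    qed
  qed
  ultimately show ?thesis using that by blast
qed

lemma AE_eq_return_if_AE_emeasure_eq:
  fixes \<kappa> :: "'a \<Rightarrow> 'b::second_countable_topology measure"
  assumes \<kappa>: "\<kappa> \<in> measurable N (prob_algebra borel)"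
    and eq: "\<And>B. B \<in> sets borel \<Longrightarrow> AE x in N. emeasure (\<kappa> x) B = indicator B (t x)"
  shows "AE x in N. \<kappa> x = return borel (t x)"
proof -
  obtain E :: "'b set set" where E: "countable E" "Int_stable E" "UNIV \<in> E"
    "E \<subseteq> sets borel" "sets borel = sigma_sets UNIV E"
    by (rule countable_Int_stable_generator_borel)
  \<comment> \<open>Only countably many B need to be handled, so the exceptional null sets can be united.\<close>
  have "AE x in N. \<forall>B\<in>E. emeasure (\<kappa> x) B = indicator B (t x)"
    using E eq by (intro AE_ball_countable') auto
  then show ?thesis
  proof (rule AE_mp, intro AE_I2 impI)
    fix x assume "x \<in> space N" and eq_E: "\<forall>B\<in>E. emeasure (\<kappa> x) B = indicator B (t x)"
    then have "\<kappa> x \<in> space (prob_algebra borel)"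
      using measurable_space[OF \<kappa>] by blast
    then have sets_\<kappa>: "sets (\<kappa> x) = sets borel" and "prob_space (\<kappa> x)"
      by (auto simp: space_prob_algebra)
    have "emeasure (\<kappa> x) (space (\<kappa> x)) = 1"
      using \<open>prob_space (\<kappa> x)\<close> by (rule prob_space.emeasure_space_1)
    then have "emeasure (\<kappa> x) UNIV \<noteq> \<infinity>"
      using sets_eq_imp_space_eq[OF sets_\<kappa>] by simp
    show "\<kappa> x = return borel (t x)"
    proof (rule measure_eqI_generator_eq_countable[where E=E and \<Omega>=UNIV and A="{UNIV}"])
      show "\<And>B. B \<in> E \<Longrightarrow> emeasure (\<kappa> x) B = emeasure (return borel (t x)) B"
        using E(4) eq_E by (subst emeasure_return) auto
    qed (use E sets_\<kappa> \<open>emeasure (\<kappa> x) UNIV \<noteq> \<infinity>\<close> in auto)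
  qed
qed

lemma AE_cond_distr_emeasure_eq_indicator:
  assumes "finite_measure Q" and cd: "is_cond_distr Q X Y \<kappa>"
    and [measurable]: "X \<in> borel_measurable Q" "Y \<in> borel_measurable Q" "T \<in> borel_measurable borel"
      "B \<in> sets borel"
    and Y_eq: "AE \<omega> in Q. Y \<omega> = T (X \<omega>)"
  shows "AE x in distr Q borel X. emeasure (\<kappa> x) B = indicator B (T x)"
proof -
  let ?\<mu> = "distr Q borel X"
  interpret \<mu>: finite_measure ?\<mu>
    using \<open>finite_measure Q\<close> by (rule finite_measure.finite_measure_distr) simp
  have \<kappa>: "\<kappa> \<in> measurable borel (subprob_algebra borel)"
    using cd unfolding is_cond_distr_def by (blast intro: measurable_prob_algebraD)
  have [measurable]: "(\<lambda>x. emeasure (\<kappa> x) B) \<in> borel_measurable ?\<mu>"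
    using measurable_compose[OF \<kappa> measurable_emeasure_subprob_algebra] by (simp add: o_def)
  have "density ?\<mu> (\<lambda>x. emeasure (\<kappa> x) B) = density ?\<mu> (\<lambda>x. indicator B (T x))"
  proof (rule measure_eqI)
    fix A assume "A \<in> sets (density ?\<mu> (\<lambda>x. emeasure (\<kappa> x) B))"
    then have [measurable]: "A \<in> sets borel" by simp
    have "emeasure (density ?\<mu> (\<lambda>x. emeasure (\<kappa> x) B)) A = (\<integral>\<^sup>+ x \<in> A. emeasure (\<kappa> x) B \<partial>?\<mu>)"
      by (simp add: emeasure_density)
    also have "\<dots> = emeasure Q {\<omega> \<in> space Q. X \<omega> \<in> A \<and> Y \<omega> \<in> B}"
      using cd unfolding is_cond_distr_def by simp
    also have "\<dots> = emeasure Q (X -` (A \<inter> T -` B) \<inter> space Q)"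
      by (rule emeasure_eq_AE) (use Y_eq in \<open>auto elim!: AE_mp\<close>)
    also have "\<dots> = (\<integral>\<^sup>+ x. indicator (A \<inter> T -` B) x \<partial>?\<mu>)"
      by (simp add: emeasure_distr)
    also have "\<dots> = (\<integral>\<^sup>+ x \<in> A. indicator B (T x) \<partial>?\<mu>)"
      by (rule nn_integral_cong) (auto simp: indicator_def)
    also have "\<dots> = emeasure (density ?\<mu> (\<lambda>x. indicator B (T x))) A"
      by (simp add: emeasure_density)
    finally show "emeasure (density ?\<mu> (\<lambda>x. emeasure (\<kappa> x) B)) A
        = emeasure (density ?\<mu> (\<lambda>x. indicator B (T x))) A" .
  qed simp
  then show ?thesis
    by (intro \<mu>.density_unique) auto
qed

lemma AE_cond_distr_eq_return:
  fixes X :: "'w \<Rightarrow> 'a::topological_space" and Y :: "'w \<Rightarrow> 'b::second_countable_topology"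
  assumes "finite_measure Q" and cd: "is_cond_distr Q X Y \<kappa>"
    and "X \<in> borel_measurable Q" "Y \<in> borel_measurable Q" "T \<in> borel_measurable borel"
    and "AE \<omega> in Q. Y \<omega> = T (X \<omega>)"
  shows "AE x in distr Q borel X. \<kappa> x = return borel (T x)"
proof (rule AE_eq_return_if_AE_emeasure_eq)
  show "\<kappa> \<in> measurable (distr Q borel X) (prob_algebra borel)"
    using cd unfolding is_cond_distr_def by simp
qed (rule AE_cond_distr_emeasure_eq_indicator[OF assms(1-5) _ assms(6)])

lemma distr_eq_distr_comp_AE:
  assumes [measurable]: "X \<in> measurable Q N" "T \<in> measurable N K" "Y \<in> measurable Q K"
    and "AE \<omega> in Q. Y \<omega> = T (X \<omega>)"
  shows "distr Q K Y = distr (distr Q N X) K T"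
proof -
  have "distr Q K Y = distr Q K (\<lambda>\<omega>. T (X \<omega>))"
    by (rule distr_cong_AE) (use assms(4) in \<open>auto elim!: AE_mp\<close>)
  also have "\<dots> = distr (distr Q N X) K T"
    by (subst distr_distr) (auto simp: o_def)
  finally show ?thesis .
qed

lemma borel_measurable_restrict_space_section:
  assumes "(\<lambda>(s, u). F s u) \<in> borel_measurable (restrict_space borel (A \<times> B))" and "t \<in> A"
  shows "F t \<in> borel_measurable (restrict_space borel B)"
proof -
  have "Pair t \<in> measurable (restrict_space borel B) (restrict_space borel (A \<times> B))"
    using \<open>t \<in> A\<close> by (intro measurable_restrict_space3 borel_measurable_continuous_onI continuous_intros) auto
  from measurable_comp[OF this assms(1)] show ?thesis
    by (simp add: o_def)
qed

theorem proposition2: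
  fixes M :: "'w measure"
    and X :: "'w \<Rightarrow> 'x::euclidean_space"
    and S :: "'w \<Rightarrow> real"
    and SS :: "real set"
    and UX :: "'w \<Rightarrow> 'u::euclidean_space"
    and UXsp :: "'u set"
    and Xdo :: "real \<Rightarrow> 'w \<Rightarrow> 'x"
    and F :: "real \<Rightarrow> 'u \<Rightarrow> 'x"
  assumes P: "prob_space M"
    and X_meas: "X \<in> borel_measurable M"
    and S_meas: "S \<in> borel_measurable M"
    and SS_fin: "finite SS"
    and S_range: "\<forall>\<omega> \<in> space M. S \<omega> \<in> SS"
    and S_pos: "\<forall>s \<in> SS. measure M (event_eq M S s) > 0"
    and UXsp_borel: "UXsp \<in> sets borel"
    and UX_meas: "UX \<in> borel_measurable M"
    and UX_range: "\<forall>\<omega> \<in> space M. UX \<omega> \<in> UXsp"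
    and Xdo_meas: "\<forall>s \<in> SS. Xdo s \<in> borel_measurable M"
    and F_meas: "(\<lambda>(s, u). F s u) \<in> borel_measurable (restrict_space borel (SS \<times> UXsp))"
    and X_eq: "AE \<omega> in M. X \<omega> = F (S \<omega>) (UX \<omega>)"
    and Xdo_eq: "\<forall>s \<in> SS. AE \<omega> in M. Xdo s \<omega> = F s (UX \<omega>)"
    and inj: "\<forall>s \<in> SS. inj_on (F s) UXsp"
  shows "\<forall>s \<in> SS. \<forall>s' \<in> SS.
     (\<forall>\<kappa>. is_cond_distr (cond_space M S s) X (Xdo s') \<kappa> \<longrightarrow>
        (AE x in cond_law M S s X. \<kappa> x = return borel (Tstar F UXsp s s' x)))
   \<and> (\<exists>T. T \<in> borel_measurable borel
        \<and> (AE x in cond_law M S s X. x \<in> F s ` UXsp \<and> T x = Tstar F UXsp s s' x)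
        \<and> cond_law M S s (Xdo s') = distr (cond_law M S s X) borel T
        \<and> cond_law M S s (\<lambda>\<omega>. (X \<omega>, Xdo s' \<omega>))
            = distr (cond_law M S s X) borel (\<lambda>x. (x, T x)))"
proof (intro ballI, goal_cases)
  case (1 s s')
  then have s: "s \<in> SS" and s': "s' \<in> SS" .
  define Q where "Q = cond_space M S s"
  have "prob_space Q"
    unfolding Q_def using S_pos s by (intro prob_space_cond_space[OF P S_meas]) blast
  then have Q_finite: "finite_measure Q"
    by (simp add: prob_space_def)
  have X_Q [measurable]: "X \<in> borel_measurable Q"
    and Xdo_Q [measurable]: "Xdo s' \<in> borel_measurable Q"
    and UX_Q: "UX \<in> borel_measurable Q"
    using X_meas Xdo_meas s' UX_meas by (simp_all add: Q_def)
  have "AE \<omega> in M. UX \<omega> \<in> UXsp"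
    using UX_range by (intro AE_I2) blast
  with X_eq bspec[OF Xdo_eq s']
  have "AE \<omega> in M. S \<omega> = s \<longrightarrow> UX \<omega> \<in> UXsp \<and> X \<omega> = F s (UX \<omega>) \<and> Xdo s' \<omega> = F s' (UX \<omega>)"
    by eventually_elim auto
  then have AE_Q: "AE \<omega> in Q. UX \<omega> \<in> UXsp \<and> X \<omega> = F s (UX \<omega>) \<and> Xdo s' \<omega> = F s' (UX \<omega>)"
    unfolding Q_def AE_cond_space_iff[OF S_meas] .
  have inj_s: "inj_on (F s) UXsp"
    using inj s by blast
  obtain T where T: "T \<in> borel_measurable borel" and Xdo_T: "AE \<omega> in Q. Xdo s' \<omega> = T (X \<omega>)"
    and T_Tstar: "AE x in distr Q borel X. x \<in> F s ` UXsp \<and> T x = Tstar F UXsp s s' x"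
    using AE_factor_through_injective[OF Q_finite UX_Q X_Q Xdo_Q UXsp_borel borel_measurable_restrict_space_section[OF F_meas s]
        borel_measurable_restrict_space_section[OF F_meas s'] inj_s AE_Q]
    unfolding Tstar_def by blast
  have law_X: "cond_law M S s X = distr Q borel X"
    by (simp add: cond_law_def Q_def)
  have "AE x in cond_law M S s X. \<kappa> x = return borel (Tstar F UXsp s s' x)"
    if "is_cond_distr (cond_space M S s) X (Xdo s') \<kappa>" for \<kappa>
  proof -
    have "AE x in distr Q borel X. \<kappa> x = return borel (T x)"
      using that unfolding Q_def[symmetric] by (rule AE_cond_distr_eq_return[OF Q_finite _ X_Q Xdo_Q T Xdo_T])
    with T_Tstar show ?thesis
      unfolding law_X by eventually_elim simp
  qed
  moreover have "cond_law M S s (Xdo s') = distr (cond_law M S s X) borel T"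
    unfolding law_X unfolding cond_law_def Q_def[symmetric]
    by (rule distr_eq_distr_comp_AE[OF _ T _ Xdo_T]) simp_all
  moreover have "cond_law M S s (\<lambda>\<omega>. (X \<omega>, Xdo s' \<omega>)) = distr (cond_law M S s X) borel (\<lambda>x. (x, T x))"
    unfolding law_X unfolding cond_law_def Q_def[symmetric]
    by (rule distr_eq_distr_comp_AE) (use Xdo_T T in \<open>auto elim: AE_mp\<close>)
  ultimately show ?case
    using T T_Tstar unfolding law_X by blast
qed

end
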